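(* On the point-like global monopole spacetime $(M,g)$, the Ricci tensor $S$ satisfies: (a) $(M,g)$ is not Einstein, i.e. there is no function $f$ with $S=f\,g$, and it is not quasi-Einstein, i.e. there is no function $a$ for which $S-a\,g$ has rank $1$ at every point; (b) $(M,g)$ is an Einstein manifold of degree $2$: $S^2=\frac{\alpha^2-1}{r^2}\,S$; (c) $(M,g)$ is $2$-quasi-Einstein: there is a function $a$ (namely $a=0$) such that $S-a\,g$ has rank $2$ at every point; (d) the Riemann curvature tensor decomposes as $R=\frac{r^2}{2(\alpha^2-1)}\,S\wedge S$.
   Context: Let $M=\{(t,r,\theta,\phi):t\in\mathbb R,\ r>0,\ 0<\theta<\pi,\ 0<\phi<2\pi\}$ with coordinates $x^1=t,x^2=r,x^3=\theta,x^4=\phi$, equipped with the Lorentzian metric (point-like global monopole metric) $g=-dt^2+\alpha^{-2}dr^2+r^2(d\theta^2+\sin^2\theta\,d\phi^2)$, where $\alpha$ is a constant with $0<\alpha<1$. Let $\Gamma^l_{ij}$ be the Christoffel symbols of the Levi-Civita connection $\nabla$. Curvature conventions: $R^l{}_{ijk}=\partial_j\Gamma^l_{ik}-\partial_k\Gamma^l_{ij}+\Gamma^l_{mj}\Gamma^m_{ik}-\Gamma^l_{mk}\Gamma^m_{ij}$ (components of the $(1,3)$ curvature tensor $\widetilde R$), $R_{hijk}=g_{hl}R^l{}_{ijk}$ (components of the $(0,4)$ Riemann tensor $R$), Ricci tensor $S_{ij}=g^{hk}R_{hijk}$, scalar curvature $\kappa=g^{ij}S_{ij}$. The tensor $S^2$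 is $S^2_{ij}=S_{ik}g^{kl}S_{lj}$. For symmetric $(0,2)$-tensors $A,B$ the Kulkarni–Nomizu product is $(A\wedge B)_{hijk}=A_{hk}B_{ij}+A_{ij}B_{hk}-A_{hj}B_{ik}-A_{ik}B_{hj}$. *)

theory Defs
  imports "HOL-Analysis.Analysis"
begin

text \<open>Points of M are vectors p :: real^4 with coordinates
  x^1 = t = p$1, x^2 = r = p$2, x^3 = theta = p$3, x^4 = phi = p$4.
  Indices i j k ... range over the type 4 (the four values 1,2,3,4).\<close>

definition monopole_M :: "(real^4) set" where
  "monopole_M = {p. p$2 > 0 \<and> 0 < p$3 \<and> p$3 < pi \<and> 0 < p$4 \<and> p$4 < 2*pi}"

definition gm :: "real \<Rightarrow> real^4 \<Rightarrow> 4 \<Rightarrow> 4 \<Rightarrow> real" where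
  "gm \<alpha> p i j =
     (if i \<noteq> j then 0
      else if i = 1 then -1
      else if i = 2 then 1 / \<alpha>^2
      else if i = 3 then (p$2)^2
      else (p$2)^2 * (sin (p$3))^2)"

definition gmat :: "real \<Rightarrow> real^4 \<Rightarrow> real^4^4" where
  "gmat \<alpha> p = (\<chi> i j. gm \<alpha> p i j)"

definition ginv :: "real \<Rightarrow> real^4 \<Rightarrow> 4 \<Rightarrow> 4 \<Rightarrow> real" where
  "ginv \<alpha> p i j = matrix_inv (gmat \<alpha> p) $ i $ j"

definition pd :: "4 \<Rightarrow> (real^4 \<Rightarrow> real) \<Rightarrow> real^4 \<Rightarrow> real" where
  "pd j F p = deriv (\<lambda>s. F (\<chi> k. if k = j then s else p$k)) (p$j)"

definition Gam :: "real \<Rightarrow> real^4 \<Rightarrow> 4 \<Rightarrow> 4 \<Rightarrow> 4 \<Rightarrow> real" where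
  "Gam \<alpha> p l i j = (1/2) * (\<Sum>m\<in>UNIV. ginv \<alpha> p l m *
      (pd i (\<lambda>q. gm \<alpha> q m j) p + pd j (\<lambda>q. gm \<alpha> q m i) p - pd m (\<lambda>q. gm \<alpha> q i j) p))"

definition Rup :: "real \<Rightarrow> real^4 \<Rightarrow> 4 \<Rightarrow> 4 \<Rightarrow> 4 \<Rightarrow> 4 \<Rightarrow> real" where
  "Rup \<alpha> p l i j k =
     pd j (\<lambda>q. Gam \<alpha> q l i k) p - pd k (\<lambda>q. Gam \<alpha> q l i j) p
     + (\<Sum>m\<in>UNIV. Gam \<alpha> p l m j * Gam \<alpha> p m i k)
     - (\<Sum>m\<in>UNIV. Gam \<alpha> p l m k * Gam \<alpha> p m i j)"

definition Rdown :: "real \<Rightarrow> real^4 \<Rightarrow> 4 \<Rightarrow> 4 \<Rightarrow> 4 \<Rightarrow> 4 \<Rightarrow> real" where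
  "Rdown \<alpha> p h i j k = (\<Sum>l\<in>UNIV. gm \<alpha> p h l * Rup \<alpha> p l i j k)"

definition Ric :: "real \<Rightarrow> real^4 \<Rightarrow> 4 \<Rightarrow> 4 \<Rightarrow> real" where
  "Ric \<alpha> p i j = (\<Sum>h\<in>UNIV. \<Sum>k\<in>UNIV. ginv \<alpha> p h k * Rdown \<alpha> p h i j k)"

definition Ric2 :: "real \<Rightarrow> real^4 \<Rightarrow> 4 \<Rightarrow> 4 \<Rightarrow> real" where
  "Ric2 \<alpha> p i j = (\<Sum>k\<in>UNIV. \<Sum>l\<in>UNIV. Ric \<alpha> p i k * ginv \<alpha> p k l * Ric \<alpha> p l j)"

definition KN :: "(4 \<Rightarrow> 4 \<Rightarrow> real) \<Rightarrow> (4 \<Rightarrow> 4 \<Rightarrow> real) \<Rightarrow> 4 \<Rightarrow> 4 \<Rightarrow> 4 \<Rightarrow> 4 \<Rightarrow> real" where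
  "KN A B h i j k = A h k * B i j + A i j * B h k - A h j * B i k - A i k * B h j"

definition tmat :: "(4 \<Rightarrow> 4 \<Rightarrow> real) \<Rightarrow> real^4^4" where
  "tmat A = (\<chi> i j. A i j)"

end

theory Submission
  imports Defs
begin

text \<open>The metric is diagonal, so its inverse,
  the Christoffel symbols and the curvature come out in closed form: up to the symmetries of R
  the only nonzero component is R_3434 = (1 - alpha^2) r^2 sin^2 theta, which reflects the
  solid angle deficit. Hence S = (alpha^2 - 1)(d theta^2 + sin^2 theta d phi^2), from which
  S^2 = ((alpha^2 - 1)/r^2) S and the Kulkarni-Nomizu form of R are read off. The tensor S - a g is
  diagonal with entries a, -a/alpha^2, alpha^2 - 1 - a r^2 and (alpha^2 - 1 - a r^2) sin^2 theta,
  so its rank is 0, 2 or 4 but never 1, and it is 2 for a = 0.\<close>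

lemma cases_4 [case_names 1 2 3 4]:
  fixes x :: 4
  obtains "x = 1" | "x = 2" | "x = 3" | "x = 4"
  using exhaust_4 by blast

lemma matrix_inv_unique:
  fixes A :: "'a::semiring_1^'n^'m"
  assumes "A ** B = mat 1" "B ** A = mat 1"
  shows "matrix_inv A = B"
proof -
  have "\<exists>A'. A ** A' = mat 1 \<and> A' ** A = mat 1" using assms by blast
  from someI_ex[OF this] have C: "A ** matrix_inv A = mat 1" "matrix_inv A ** A = mat 1"
    unfolding matrix_inv_def by auto
  have "matrix_inv A = matrix_inv A ** (A ** B)" using assms by (simp add: matrix_mul_rid)
  also have "\<dots> = B" using C by (simp add: matrix_mul_assoc matrix_mul_lid)
  finally show ?thesis .
qed

lemma rank_diagonal:
  fixes A :: "real^'n^'n"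
  assumes "\<And>i j. i \<noteq> j \<Longrightarrow> A$i$j = 0"
  shows "rank A = card {i. A$i$i \<noteq> 0}"
proof -
  define S where "S = {i. A$i$i \<noteq> 0}"
  have row: "row i A = A$i$i *\<^sub>R axis i 1" for i
    using assms by (auto simp: row_def vec_eq_iff axis_def)
  have "span (rows A) = span ((\<lambda>i. axis i (1::real)) ` S)"
  proof (rule span_eq[THEN iffD2], intro conjI subsetI)
    fix x assume "x \<in> rows A"
    then obtain i where "x = A$i$i *\<^sub>R axis i 1" by (auto simp: rows_def row)
    then show "x \<in> span ((\<lambda>i. axis i (1::real)) ` S)"
      by (cases "i \<in> S") (auto simp: S_def intro: span_mul span_base span_zero)
  next
    fix x assume "x \<in> (\<lambda>i. axis i (1::real)) ` S"
    then obtain i where "i \<in> S" "x = axis i 1" by blast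
    then have "x = (1 / A$i$i) *\<^sub>R row i A" by (simp add: row S_def)
    then show "x \<in> span (rows A)" by (auto simp: rows_def intro: span_mul span_base)
  qed
  then have "rank A = dim ((\<lambda>i. axis i (1::real)) ` S)"
    by (metis row_rank_def dim_span)
  also have "\<dots> = card ((\<lambda>i. axis i (1::real)) ` S)"
    by (rule dim_eq_card_independent, rule independent_substdbasis) auto
  also have "\<dots> = card S"
    by (rule card_image) (auto simp: inj_on_def axis_eq_axis)
  finally show ?thesis by (simp add: S_def)
qed

lemma rank_tmat_diagonal:
  assumes "\<And>i j. i \<noteq> j \<Longrightarrow> D i j = 0"
  shows "rank (tmat D) = card {i. D i i \<noteq> 0}"
  using rank_diagonal[of "tmat D"] assms by (simp add: tmat_def)

lemma pd_cong_open:
  assumes "open S" "p \<in> S" "\<And>q. q \<in> S \<Longrightarrow> F q = G q"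
  shows "pd j F p = pd j G p"
proof -
  let ?L = "\<lambda>s. (\<chi> k. if k = j then s else p$k) :: real^4"
  have "continuous_on UNIV ?L"
  proof (intro continuous_on_vec_lambda)
    show "continuous_on UNIV (\<lambda>s. if k = j then s else p$k)" for k
      by (cases "k = j") auto
  qed
  then have "open (?L -` S)" using assms(1) by (simp add: open_vimage)
  moreover have "?L (p$j) = p" by (simp add: vec_eq_iff)
  ultimately have "eventually (\<lambda>s. ?L s \<in> S) (nhds (p$j))"
    using assms(2) eventually_nhds_in_open[of "?L -` S"] by auto
  then have "eventually (\<lambda>s. F (?L s) = G (?L s)) (nhds (p$j))"
    by eventually_elim (simp add: assms(3))
  then show ?thesis unfolding pd_def by (rule deriv_cong_ev) simp
qed

lemma deriv_cot:
  fixes x :: real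
  assumes "sin x \<noteq> 0"
  shows "deriv (\<lambda>s. cos s / sin s) x = - 1 / (sin x)^2"
proof (rule DERIV_imp_deriv)
  have "((\<lambda>s. cos s / sin s) has_real_derivative
          ((- sin x * sin x - cos x * cos x) / (sin x * sin x))) (at x)"
    by (rule derivative_eq_intros refl assms)+ (simp add: assms)
  moreover have "- sin x * sin x - cos x * cos x = -1"
    using sin_cos_squared_add[of x] by (simp add: power2_eq_square)
  ultimately show "((\<lambda>s. cos s / sin s) has_real_derivative (- 1 / (sin x)^2)) (at x)"
    by (simp add: power2_eq_square)
qed

text \<open>The next three are stated in the normal forms that the simplifier produces from the
  Christoffel symbols, so that they apply as rewrite rules.\<close>

lemma deriv_neg_linear: "deriv (\<lambda>s. - (a * s * c)) x = - (a * c :: real)"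
  by (rule DERIV_imp_deriv, (rule derivative_eq_intros refl)+) simp

lemma deriv_neg_sin_squared:
  "deriv (\<lambda>s. - (c * (sin s)^2)) x = - (c * 2 * sin x * cos x :: real)"
  by (rule DERIV_imp_deriv, (rule derivative_eq_intros refl)+) (simp add: algebra_simps)

lemma deriv_neg_sin_cos: "deriv (\<lambda>s. - (sin s * cos s)) x = (sin x)^2 - (cos (x::real))^2"
  by (rule DERIV_imp_deriv, (rule derivative_eq_intros refl)+) (simp add: power2_eq_square)

lemma open_monopole_M: "open monopole_M"
  unfolding monopole_M_def by (intro open_Collect_conj open_Collect_less continuous_intros)

lemma monopole_M_nonzero:
  assumes "p \<in> monopole_M"
  shows "p$2 \<noteq> 0" "sin (p$3) \<noteq> 0"
  using assms by (auto simp: monopole_M_def sin_gt_zero less_imp_neq[symmetric])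

lemma monopole_M_nonempty: "\<exists>p. p \<in> monopole_M"
proof
  show "(\<chi> k. 1) \<in> monopole_M" using pi_gt3 by (simp add: monopole_M_def)
qed

definition monopole_ginv :: "real \<Rightarrow> real^4 \<Rightarrow> 4 \<Rightarrow> 4 \<Rightarrow> real" where
  "monopole_ginv \<alpha> p i j =
     (if i \<noteq> j then 0
      else if i = 1 then -1
      else if i = 2 then \<alpha>^2
      else if i = 3 then 1/(p$2)^2
      else 1/((p$2)^2 * (sin (p$3))^2))"

lemma ginv_monopole:
  assumes "\<alpha> \<noteq> 0" "p \<in> monopole_M"
  shows "ginv \<alpha> p i j = monopole_ginv \<alpha> p i j"
proof -
  have "matrix_inv (gmat \<alpha> p) = (\<chi> i j. monopole_ginv \<alpha> p i j)"
    by (rule matrix_inv_unique)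
      (use assms monopole_M_nonzero[OF assms(2)] in
        \<open>auto simp: matrix_matrix_mult_def gmat_def gm_def monopole_ginv_def mat_def
                    vec_eq_iff forall_4 sum_4\<close>)
  then show ?thesis by (simp add: ginv_def)
qed

definition monopole_metric_deriv :: "real^4 \<Rightarrow> 4 \<Rightarrow> 4 \<Rightarrow> 4 \<Rightarrow> real" where
  "monopole_metric_deriv p j m i =
     (if m \<noteq> i then 0
      else if j = 2 \<and> m = 3 then 2 * p$2
      else if j = 2 \<and> m = 4 then 2 * p$2 * (sin (p$3))^2
      else if j = 3 \<and> m = 4 then 2 * (p$2)^2 * sin (p$3) * cos (p$3)
      else 0)"

lemma pd_gm: "pd j (\<lambda>q. gm \<alpha> q m i) p = monopole_metric_deriv p j m i"
  unfolding pd_def gm_def monopole_metric_deriv_def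
  by (cases j rule: cases_4; cases m rule: cases_4; cases i rule: cases_4;
      simp; (rule DERIV_imp_deriv; auto intro!: derivative_eq_intros simp: power2_eq_square)?)

definition monopole_christoffel :: "real \<Rightarrow> real \<Rightarrow> real \<Rightarrow> 4 \<Rightarrow> 4 \<Rightarrow> 4 \<Rightarrow> real" where
  "monopole_christoffel \<alpha> r \<theta> l i j =
     (if l = 2 \<and> i = 3 \<and> j = 3 then -(\<alpha>^2 * r)
      else if l = 2 \<and> i = 4 \<and> j = 4 then -(\<alpha>^2 * r * (sin \<theta>)^2)
      else if l = 3 \<and> ((i = 2 \<and> j = 3) \<or> (i = 3 \<and> j = 2)) then 1/r
      else if l = 3 \<and> i = 4 \<and> j = 4 then -(sin \<theta> * cos \<theta>)
      else if l = 4 \<and> ((i = 2 \<and> j = 4) \<or> (i = 4 \<and> j = 2)) then 1/r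
      else if l = 4 \<and> ((i = 3 \<and> j = 4) \<or> (i = 4 \<and> j = 3)) then cos \<theta> / sin \<theta>
      else 0)"

lemma Gam_monopole:
  assumes "\<alpha> \<noteq> 0" "p \<in> monopole_M"
  shows "Gam \<alpha> p l i j = monopole_christoffel \<alpha> (p$2) (p$3) l i j"
  unfolding Gam_def ginv_monopole[OF assms] pd_gm sum_4
  using assms monopole_M_nonzero[OF assms(2)]
  by (cases l rule: cases_4; cases i rule: cases_4; cases j rule: cases_4;
      simp add: monopole_ginv_def monopole_metric_deriv_def monopole_christoffel_def
                field_simps power2_eq_square)

definition monopole_christoffel_deriv :: "real \<Rightarrow> real \<Rightarrow> real \<Rightarrow> 4 \<Rightarrow> 4 \<Rightarrow> 4 \<Rightarrow> 4 \<Rightarrow> real" where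
  "monopole_christoffel_deriv \<alpha> r \<theta> j l i k =
    (if j = 2 then
       (if l = 2 \<and> i = 3 \<and> k = 3 then -(\<alpha>^2)
        else if l = 2 \<and> i = 4 \<and> k = 4 then -(\<alpha>^2 * (sin \<theta>)^2)
        else if l = 3 \<and> ((i = 2 \<and> k = 3) \<or> (i = 3 \<and> k = 2)) then -1/r^2
        else if l = 4 \<and> ((i = 2 \<and> k = 4) \<or> (i = 4 \<and> k = 2)) then -1/r^2
        else 0)
     else if j = 3 then
       (if l = 2 \<and> i = 4 \<and> k = 4 then -(\<alpha>^2 * r * 2 * sin \<theta> * cos \<theta>)
        else if l = 3 \<and> i = 4 \<and> k = 4 then -((cos \<theta>)^2 - (sin \<theta>)^2)
        else if l = 4 \<and> ((i = 3 \<and> k = 4) \<or> (i = 4 \<and> k = 3)) then -1/(sin \<theta>)^2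
        else 0)
     else 0)"

lemma pd_monopole_christoffel:
  assumes "p \<in> monopole_M"
  shows "pd j (\<lambda>q. monopole_christoffel \<alpha> (q$2) (q$3) l i k) p
           = monopole_christoffel_deriv \<alpha> (p$2) (p$3) j l i k"
  unfolding pd_def monopole_christoffel_def monopole_christoffel_deriv_def
  using monopole_M_nonzero[OF assms]
  by (cases j rule: cases_4; cases l rule: cases_4; cases i rule: cases_4; cases k rule: cases_4;
      simp add: deriv_cot deriv_neg_linear deriv_neg_sin_squared deriv_neg_sin_cos)

definition monopole_riemann_up :: "real \<Rightarrow> real \<Rightarrow> 4 \<Rightarrow> 4 \<Rightarrow> 4 \<Rightarrow> 4 \<Rightarrow> real" where
  "monopole_riemann_up \<alpha> \<theta> l i j k =
     (if l = 3 \<and> i = 4 \<and> j = 3 \<and> k = 4 then (1 - \<alpha>^2) * (sin \<theta>)^2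
      else if l = 3 \<and> i = 4 \<and> j = 4 \<and> k = 3 then - ((1 - \<alpha>^2) * (sin \<theta>)^2)
      else if l = 4 \<and> i = 3 \<and> j = 3 \<and> k = 4 then - (1 - \<alpha>^2)
      else if l = 4 \<and> i = 3 \<and> j = 4 \<and> k = 3 then 1 - \<alpha>^2
      else 0)"

lemma monopole_christoffel_curvature:
  fixes \<alpha> r \<theta> :: real
  assumes "r \<noteq> 0" "sin \<theta> \<noteq> 0"
  defines "\<Gamma> \<equiv> monopole_christoffel \<alpha> r \<theta>"
    and "d\<Gamma> \<equiv> monopole_christoffel_deriv \<alpha> r \<theta>"
  shows "\<forall>l i j k. d\<Gamma> j l i k - d\<Gamma> k l i j
     + (\<Sum>m\<in>UNIV. \<Gamma> l m j * \<Gamma> m i k) - (\<Sum>m\<in>UNIV. \<Gamma> l m k * \<Gamma> m i j)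
     = monopole_riemann_up \<alpha> \<theta> l i j k"
  unfolding \<Gamma>_def d\<Gamma>_def sum_4 forall_4
  by (intro conjI; simp add: monopole_christoffel_def monopole_christoffel_deriv_def
        monopole_riemann_up_def assms; simp add: field_simps power2_eq_square assms;
      (insert sin_cos_squared_add[of \<theta>], algebra))

lemma Rup_monopole:
  assumes "\<alpha> \<noteq> 0" "p \<in> monopole_M"
  shows "Rup \<alpha> p l i j k = monopole_riemann_up \<alpha> (p$3) l i j k"
proof -
  have "pd j' (\<lambda>q. Gam \<alpha> q l' i' k') p = monopole_christoffel_deriv \<alpha> (p$2) (p$3) j' l' i' k'"
    for j' l' i' k'
  proof -
    have "pd j' (\<lambda>q. Gam \<alpha> q l' i' k') p
          = pd j' (\<lambda>q. monopole_christoffel \<alpha> (q$2) (q$3) l' i' k') p"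
      by (rule pd_cong_open[OF open_monopole_M assms(2)]) (simp add: Gam_monopole[OF assms(1)])
    then show ?thesis using pd_monopole_christoffel[OF assms(2)] by simp
  qed
  then show ?thesis
    unfolding Rup_def Gam_monopole[OF assms]
    using monopole_christoffel_curvature[OF monopole_M_nonzero[OF assms(2)]] by simp
qed

lemma Rdown_diagonal: "Rdown \<alpha> p h i j k = gm \<alpha> p h h * Rup \<alpha> p h i j k"
  unfolding Rdown_def sum_4 by (cases h rule: cases_4) (simp_all add: gm_def)

lemma Ric_contraction:
  assumes "\<alpha> \<noteq> 0" "p \<in> monopole_M"
  shows "Ric \<alpha> p i j = (\<Sum>k\<in>UNIV. Rup \<alpha> p k i j k)"
  unfolding Ric_def Rdown_diagonal ginv_monopole[OF assms] sum_4
  using assms(1) monopole_M_nonzero[OF assms(2)]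
  by (simp add: monopole_ginv_def gm_def)

definition monopole_ricci :: "real \<Rightarrow> real \<Rightarrow> 4 \<Rightarrow> 4 \<Rightarrow> real" where
  "monopole_ricci \<alpha> \<theta> i j =
     (if i = j \<and> i = 3 then \<alpha>^2 - 1
      else if i = j \<and> i = 4 then (\<alpha>^2 - 1) * (sin \<theta>)^2
      else 0)"

lemma Ric_monopole:
  assumes "\<alpha> \<noteq> 0" "p \<in> monopole_M"
  shows "Ric \<alpha> p = monopole_ricci \<alpha> (p$3)"
proof (intro ext)
  show "Ric \<alpha> p i j = monopole_ricci \<alpha> (p$3) i j" for i j
    unfolding Ric_contraction[OF assms] Rup_monopole[OF assms] sum_4
    by (cases i rule: cases_4; cases j rule: cases_4;
        simp add: monopole_riemann_up_def monopole_ricci_def algebra_simps)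
qed

lemma monopole_not_einstein:
  assumes "\<alpha> \<noteq> 0" "\<alpha>^2 \<noteq> 1"
  shows "\<not> (\<exists>f. \<forall>p\<in>monopole_M. \<forall>i j. Ric \<alpha> p i j = f p * gm \<alpha> p i j)"
proof
  assume "\<exists>f. \<forall>p\<in>monopole_M. \<forall>i j. Ric \<alpha> p i j = f p * gm \<alpha> p i j"
  then obtain f p where p: "p \<in> monopole_M" and f: "\<forall>i j. Ric \<alpha> p i j = f p * gm \<alpha> p i j"
    using monopole_M_nonempty by blast
  have "f p = 0"
    using f[rule_format, of 1 1] by (simp add: Ric_monopole[OF assms(1) p] monopole_ricci_def gm_def)
  then show False
    using f[rule_format, of 3 3] assms(2) by (simp add: Ric_monopole[OF assms(1) p] monopole_ricci_def)
qed

lemma rank_Ric_sub_metric: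
  assumes "\<alpha> \<noteq> 0" "p \<in> monopole_M"
  shows "rank (tmat (\<lambda>i j. Ric \<alpha> p i j - c * gm \<alpha> p i j))
           = (if c = 0 then 0 else 2) + (if c * (p$2)^2 = \<alpha>^2 - 1 then 0 else 2)"
proof -
  let ?D = "\<lambda>i j. Ric \<alpha> p i j - c * gm \<alpha> p i j"
  have s: "sin (p$3) \<noteq> 0" using monopole_M_nonzero[OF assms(2)] by simp
  have "{i. ?D i i \<noteq> 0}
        = (if c = 0 then {} else {1, 2}) \<union> (if c * (p$2)^2 = \<alpha>^2 - 1 then {} else {3, 4})"
  proof (rule set_eqI)
    show "i \<in> {i. ?D i i \<noteq> 0}
          \<longleftrightarrow> i \<in> (if c = 0 then {} else {1, 2}) \<union> (if c * (p$2)^2 = \<alpha>^2 - 1 then {} else {3, 4})"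
      for i
      using assms(1) s
      by (cases i rule: cases_4)
         (auto simp: Ric_monopole[OF assms] monopole_ricci_def gm_def right_diff_distrib[symmetric])
  qed
  moreover have "rank (tmat ?D) = card {i. ?D i i \<noteq> 0}"
    by (rule rank_tmat_diagonal) (simp add: Ric_monopole[OF assms] monopole_ricci_def gm_def)
  ultimately show ?thesis
    by (cases "c = 0"; cases "c * (p$2)^2 = \<alpha>^2 - 1") simp_all
qed

lemma monopole_not_quasi_einstein:
  assumes "\<alpha> \<noteq> 0"
  shows "\<not> (\<exists>a. \<forall>p\<in>monopole_M. rank (tmat (\<lambda>i j. Ric \<alpha> p i j - a p * gm \<alpha> p i j)) = 1)"
proof
  assume "\<exists>a. \<forall>p\<in>monopole_M. rank (tmat (\<lambda>i j. Ric \<alpha> p i j - a p * gm \<alpha> p i j)) = 1"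
  then obtain a p where "p \<in> monopole_M"
    and "rank (tmat (\<lambda>i j. Ric \<alpha> p i j - a p * gm \<alpha> p i j)) = 1"
    using monopole_M_nonempty by blast
  then show False using rank_Ric_sub_metric[OF assms, of p "a p"] by (simp split: if_splits)
qed

lemma Ric2_monopole:
  assumes "\<alpha> \<noteq> 0" "p \<in> monopole_M"
  shows "Ric2 \<alpha> p i j = (\<alpha>^2 - 1) / (p$2)^2 * Ric \<alpha> p i j"
  unfolding Ric2_def Ric_monopole[OF assms] ginv_monopole[OF assms] sum_4
  using monopole_M_nonzero[OF assms(2)]
  by (cases i rule: cases_4; cases j rule: cases_4;
      simp add: monopole_ginv_def monopole_ricci_def field_simps power2_eq_square)

lemma Rdown_monopole_KN:
  assumes "\<alpha> \<noteq> 0" "\<alpha>^2 \<noteq> 1" "p \<in> monopole_M"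
  shows "Rdown \<alpha> p h i j k = (p$2)^2 / (2 * (\<alpha>^2 - 1)) * KN (Ric \<alpha> p) (Ric \<alpha> p) h i j k"
  unfolding Rdown_diagonal Rup_monopole[OF assms(1,3)] Ric_monopole[OF assms(1,3)]
  using assms(2)
  by (cases h rule: cases_4; cases i rule: cases_4; cases j rule: cases_4; cases k rule: cases_4;
      simp add: gm_def monopole_riemann_up_def monopole_ricci_def KN_def;
      simp add: field_simps power2_eq_square)

theorem proposition3p1:
  fixes \<alpha> :: real
  assumes "0 < \<alpha>" and "\<alpha> < 1"
  shows
   "(\<not> (\<exists>f :: real^4 \<Rightarrow> real. \<forall>p\<in>monopole_M. \<forall>i j. Ric \<alpha> p i j = f p * gm \<alpha> p i j))
    \<and> (\<not> (\<exists>a :: real^4 \<Rightarrow> real. \<forall>p\<in>monopole_M.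
          rank (tmat (\<lambda>i j. Ric \<alpha> p i j - a p * gm \<alpha> p i j)) = 1))
    \<and> (\<forall>p\<in>monopole_M. \<forall>i j. Ric2 \<alpha> p i j = (\<alpha>^2 - 1) / (p$2)^2 * Ric \<alpha> p i j)
    \<and> (\<exists>a :: real^4 \<Rightarrow> real. (\<forall>p\<in>monopole_M. a p = 0) \<and> (\<forall>p\<in>monopole_M.
          rank (tmat (\<lambda>i j. Ric \<alpha> p i j - a p * gm \<alpha> p i j)) = 2))
    \<and> (\<forall>p\<in>monopole_M. \<forall>h i j k. Rdown \<alpha> p h i j k =
          (p$2)^2 / (2 * (\<alpha>^2 - 1)) * KN (Ric \<alpha> p) (Ric \<alpha> p) h i j k)"
proof (intro conjI exI[of _ "\<lambda>_. 0"] ballI allI)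
  have "\<alpha>^2 < 1^2" by (rule power_strict_mono) (use assms in auto)
  then have \<alpha>: "\<alpha> \<noteq> 0" "\<alpha>^2 \<noteq> 1" using assms(1) by auto
  show "\<not> (\<exists>f. \<forall>p\<in>monopole_M. \<forall>i j. Ric \<alpha> p i j = f p * gm \<alpha> p i j)"
    by (rule monopole_not_einstein[OF \<alpha>])
  show "\<not> (\<exists>a. \<forall>p\<in>monopole_M. rank (tmat (\<lambda>i j. Ric \<alpha> p i j - a p * gm \<alpha> p i j)) = 1)"
    by (rule monopole_not_quasi_einstein[OF \<alpha>(1)])
  show "Ric2 \<alpha> p i j = (\<alpha>^2 - 1) / (p$2)^2 * Ric \<alpha> p i j" if "p \<in> monopole_M" for p i j
    by (rule Ric2_monopole[OF \<alpha>(1) that])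
  show "rank (tmat (\<lambda>i j. Ric \<alpha> p i j - 0 * gm \<alpha> p i j)) = 2" if "p \<in> monopole_M" for p
    using rank_Ric_sub_metric[OF \<alpha>(1) that, of 0] \<alpha>(2) by simp
  show "Rdown \<alpha> p h i j k = (p$2)^2 / (2 * (\<alpha>^2 - 1)) * KN (Ric \<alpha> p) (Ric \<alpha> p) h i j k"
    if "p \<in> monopole_M" for p h i j k
    by (rule Rdown_monopole_KN[OF \<alpha> that])
qed simp

end
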